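(* Let $\kappa$ be any cardinal. For a $\kappa$-downward directed multi-relational Kripke frame $M=\langle W,S\rangle$ define $N(M)=\langle W,\nu_M\rangle$ where $\nu_M(x)=\{Y\subseteq W\mid R[x]\subseteq Y\text{ for some }R\in S\}$. Then $N(M)$ is a $\kappa$-complete neighborhood frame, and for any two $\kappa$-downward directed multi-relational Kripke frames $M_1=\langle W_1,S_1\rangle$, $M_2=\langle W_2,S_2\rangle$, a map $f:W_1\to W_2$ is a homomorphism of multi-relational Kripke frames $M_1\to M_2$ if and only if it is a homomorphism of neighborhood frames $N(M_1)\to N(M_2)$. In particular $N$ (with $N(f)=f$) is a full and faithful functor $\mathbf{MKF}_\kappa\to\mathbf{NFR}_\kappa$.
   Context: For a binary relation $R$ on $W$ and $x\in W$, $R[x]=\{y\in W\mid xRy\}$. A multi-relational Kripke frame is a pair $\langle W,S\rangle$ where $W$ is a non-empty set and $S$ is a non-empty set of binary relations on $W$. For a cardinal $\kappa$, it is $\kappa$-downward directed if for every $S'\subseteq S$ with $|S'|<\kappa$ there is $R\in S$ with $R\subseteq\bigcap S'$ (with $\bigcap\emptyset=W\times W$). A homomorphism of multi-relational Kripke frames $f:\langle W_1,S_1\rangle\to\langle W_2,S_2\rangle$ is a map $f:W_1\to W_2$ such that: (i) for every $x\in W_1$ and $R_2\in S_2$ there is $R_1\in S_1$ such that for all $y\in W_1$, $xR_1y$ implies $f(x)R_2f(y)$; (ii) for every $x\in W_1$ and $R_1\in S_1$ there is $R_2\in S_2$ such that for all $u\in W_2$, if $f(x)R_2u$ then there exists $y\in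 W_1$ with $xR_1y$ and $f(y)=u$. $\mathbf{MKF}_\kappa$ is the category of $\kappa$-downward directed multi-relational Kripke frames with these homomorphisms. A neighborhood frame is a pair $\langle C,\nu\rangle$ with $C$ non-empty and $\nu:C\to\mathcal P(\mathcal P(C))$. It is $\kappa$-complete if $C\in\nu(c)$ for all $c$, $\nu(c)$ is upward closed under $\subseteq$ for all $c$, and $\bigcap S'\in\nu(c)$ for every $c\in C$ and every non-empty $S'\subseteq\nu(c)$ with $|S'|<\kappa$. A homomorphism of neighborhood frames $f:\langle C_1,\nu_1\rangle\to\langle C_2,\nu_2\rangle$ is a map $f:C_1\to C_2$ such that for all $c\in C_1$, $X\subseteq C_2$: $f^{-1}[X]\in\nu_1(c)\iff X\in\nu_2(f(c))$. $\mathbf{NFR}_\kappa$ is the category of $\kappa$-complete neighborhood frames with these homomorphisms. *)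

theory Defs
  imports Main
begin

text \<open>Cardinals are represented as in the BNF cardinal library of Main: a cardinal
  kappa is a relation with Card_order kappa, and "|A| < kappa" is card_of A <o kappa.\<close>

definition mkf :: "'a set \<Rightarrow> 'a rel set \<Rightarrow> bool" where
  "mkf W S \<longleftrightarrow> W \<noteq> {} \<and> S \<noteq> {} \<and> (\<forall>R\<in>S. R \<subseteq> W \<times> W)"

definition down_directed :: "'k rel \<Rightarrow> 'a set \<Rightarrow> 'a rel set \<Rightarrow> bool" where
  "down_directed \<kappa> W S \<longleftrightarrow>
     (\<forall>S'. S' \<subseteq> S \<and> (card_of S', \<kappa>) \<in> ordLess \<longrightarrow>
        (\<exists>R\<in>S. R \<subseteq> (if S' = {} then W \<times> W else \<Inter>S')))"

definition mkf_kappa :: "'k rel \<Rightarrow> 'a set \<Rightarrow> 'a rel set \<Rightarrow> bool" where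
  "mkf_kappa \<kappa> W S \<longleftrightarrow> mkf W S \<and> down_directed \<kappa> W S"

definition mkf_hom ::
  "'a set \<Rightarrow> 'a rel set \<Rightarrow> 'b set \<Rightarrow> 'b rel set \<Rightarrow> ('a \<Rightarrow> 'b) \<Rightarrow> bool" where
  "mkf_hom W1 S1 W2 S2 f \<longleftrightarrow>
     f ` W1 \<subseteq> W2 \<and>
     (\<forall>x\<in>W1. \<forall>R2\<in>S2. \<exists>R1\<in>S1. \<forall>y\<in>W1. (x, y) \<in> R1 \<longrightarrow> (f x, f y) \<in> R2) \<and>
     (\<forall>x\<in>W1. \<forall>R1\<in>S1. \<exists>R2\<in>S2. \<forall>u\<in>W2.
        (f x, u) \<in> R2 \<longrightarrow> (\<exists>y\<in>W1. (x, y) \<in> R1 \<and> f y = u))"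

definition nfr :: "'a set \<Rightarrow> ('a \<Rightarrow> 'a set set) \<Rightarrow> bool" where
  "nfr C \<nu> \<longleftrightarrow> C \<noteq> {} \<and> (\<forall>c\<in>C. \<nu> c \<subseteq> Pow C)"

definition nfr_complete :: "'k rel \<Rightarrow> 'a set \<Rightarrow> ('a \<Rightarrow> 'a set set) \<Rightarrow> bool" where
  "nfr_complete \<kappa> C \<nu> \<longleftrightarrow> nfr C \<nu> \<and>
     (\<forall>c\<in>C. C \<in> \<nu> c) \<and>
     (\<forall>c\<in>C. \<forall>X Y. X \<in> \<nu> c \<and> X \<subseteq> Y \<and> Y \<subseteq> C \<longrightarrow> Y \<in> \<nu> c) \<and>
     (\<forall>c\<in>C. \<forall>S'. S' \<subseteq> \<nu> c \<and> S' \<noteq> {} \<and> (card_of S', \<kappa>) \<in> ordLess \<longrightarrow> \<Inter>S' \<in> \<nu> c)"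

definition nfr_hom ::
  "'a set \<Rightarrow> ('a \<Rightarrow> 'a set set) \<Rightarrow> 'b set \<Rightarrow> ('b \<Rightarrow> 'b set set) \<Rightarrow> ('a \<Rightarrow> 'b) \<Rightarrow> bool" where
  "nfr_hom C1 \<nu>1 C2 \<nu>2 f \<longleftrightarrow>
     f ` C1 \<subseteq> C2 \<and>
     (\<forall>c\<in>C1. \<forall>X. X \<subseteq> C2 \<longrightarrow> ((f -` X \<inter> C1) \<in> \<nu>1 c \<longleftrightarrow> X \<in> \<nu>2 (f c)))"

definition nu_of :: "'a set \<Rightarrow> 'a rel set \<Rightarrow> 'a \<Rightarrow> 'a set set" where
  "nu_of W S x = {Y. Y \<subseteq> W \<and> (\<exists>R\<in>S. R `` {x} \<subseteq> Y)}"

end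

theory Submission
  imports Defs
begin

text \<open>For an
  intersection of fewer than \<kappa> neighbourhoods, choose one witnessing relation per
  neighbourhood; downward directedness refines this small family to a single relation.
  The forth condition on relations is equivalent to preimages of neighbourhoods being
  neighbourhoods (test with Y = R2[f x]), and the back condition to the converse (test with
  the image Y = f[R1[x]]).\<close>

lemma successors_mem_nu_of:
  assumes "R \<in> S" "R \<subseteq> W \<times> W"
  shows "R `` {x} \<in> nu_of W S x"
  using assms by (auto simp: nu_of_def)

lemma down_directed_refines_small_family:
  assumes "down_directed \<kappa> W S" "g ` I \<subseteq> S" "I \<noteq> {}" "(card_of I, \<kappa>) \<in> ordLess"
  obtains R where "R \<in> S" "\<And>i. i \<in> I \<Longrightarrow> R \<subseteq> g i"
proof -
  have "(card_of (g ` I), \<kappa>) \<in> ordLess"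
    using card_of_image assms(4) ordLeq_ordLess_trans by blast
  then obtain R where "R \<in> S" "R \<subseteq> \<Inter>(g ` I)"
    using assms(1-3) unfolding down_directed_def by (metis image_is_empty)
  then show thesis using that by blast
qed

lemma nu_of_Inter_closed:
  assumes "down_directed \<kappa> W S"
    and "S' \<subseteq> nu_of W S c" "S' \<noteq> {}" "(card_of S', \<kappa>) \<in> ordLess"
  shows "\<Inter>S' \<in> nu_of W S c"
proof -
  have "\<forall>Y\<in>S'. \<exists>R\<in>S. R `` {c} \<subseteq> Y" using assms(2) by (auto simp: nu_of_def)
  then obtain g where g: "\<And>Y. Y \<in> S' \<Longrightarrow> g Y \<in> S \<and> g Y `` {c} \<subseteq> Y" by metis
  then obtain R where "R \<in> S" "\<And>Y. Y \<in> S' \<Longrightarrow> R \<subseteq> g Y"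
    using down_directed_refines_small_family[OF assms(1) _ assms(3,4)] by blast
  then have "R `` {c} \<subseteq> \<Inter>S'" using g by blast
  moreover have "\<Inter>S' \<subseteq> W" using assms(2,3) by (auto simp: nu_of_def)
  ultimately show ?thesis using \<open>R \<in> S\<close> by (auto simp: nu_of_def)
qed

lemma nfr_complete_nu_of:
  assumes "mkf_kappa \<kappa> W S"
  shows "nfr_complete \<kappa> W (nu_of W S)"
proof -
  have frame: "W \<noteq> {}" "S \<noteq> {}" "\<And>R. R \<in> S \<Longrightarrow> R \<subseteq> W \<times> W"
    and directed: "down_directed \<kappa> W S"
    using assms by (auto simp: mkf_kappa_def mkf_def)
  obtain R where "R \<in> S" using frame(2) by blast
  then have top: "W \<in> nu_of W S c" for c
    using frame(3) by (auto simp: nu_of_def)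
  have upward: "Y \<in> nu_of W S c" if "X \<in> nu_of W S c" "X \<subseteq> Y" "Y \<subseteq> W" for c X Y
    using that unfolding nu_of_def by blast
  have "nu_of W S c \<subseteq> Pow W" for c
    by (auto simp: nu_of_def)
  then show ?thesis
    using frame(1) top upward nu_of_Inter_closed[OF directed]
    unfolding nfr_complete_def nfr_def by blast
qed

lemma preimage_mem_nu_of_if_forth:
  assumes forth: "\<forall>R2\<in>S2. \<exists>R1\<in>S1. \<forall>y\<in>W1. (x, y) \<in> R1 \<longrightarrow> (f x, f y) \<in> R2"
    and rels: "\<forall>R\<in>S1. R \<subseteq> W1 \<times> W1"
    and X: "X \<in> nu_of W2 S2 (f x)"
  shows "f -` X \<inter> W1 \<in> nu_of W1 S1 x"
proof -
  obtain R2 where "R2 \<in> S2" "R2 `` {f x} \<subseteq> X" using X by (auto simp: nu_of_def)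
  moreover obtain R1 where "R1 \<in> S1" "\<forall>y\<in>W1. (x, y) \<in> R1 \<longrightarrow> (f x, f y) \<in> R2"
    using forth \<open>R2 \<in> S2\<close> by blast
  ultimately have "R1 `` {x} \<subseteq> f -` X \<inter> W1" using rels by blast
  then show ?thesis using \<open>R1 \<in> S1\<close> by (auto simp: nu_of_def)
qed

lemma forth_if_preimage_mem_nu_of:
  assumes preimage: "\<And>X. X \<subseteq> W2 \<Longrightarrow> X \<in> nu_of W2 S2 (f x) \<Longrightarrow> f -` X \<inter> W1 \<in> nu_of W1 S1 x"
    and rels: "\<forall>R\<in>S2. R \<subseteq> W2 \<times> W2"
    and "R2 \<in> S2"
  shows "\<exists>R1\<in>S1. \<forall>y\<in>W1. (x, y) \<in> R1 \<longrightarrow> (f x, f y) \<in> R2"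
proof -
  have "R2 \<subseteq> W2 \<times> W2" using rels \<open>R2 \<in> S2\<close> by blast
  then have "f -` (R2 `` {f x}) \<inter> W1 \<in> nu_of W1 S1 x"
    by (intro preimage successors_mem_nu_of[OF \<open>R2 \<in> S2\<close>]) auto
  then show ?thesis by (auto simp: nu_of_def)
qed

lemma mem_nu_of_if_back:
  assumes backward: "\<forall>R1\<in>S1. \<exists>R2\<in>S2. \<forall>u\<in>W2. (f x, u) \<in> R2 \<longrightarrow> (\<exists>y\<in>W1. (x, y) \<in> R1 \<and> f y = u)"
    and rels: "\<forall>R\<in>S2. R \<subseteq> W2 \<times> W2"
    and "X \<subseteq> W2" and preimage: "f -` X \<inter> W1 \<in> nu_of W1 S1 x"
  shows "X \<in> nu_of W2 S2 (f x)"
proof -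
  obtain R1 where "R1 \<in> S1" "R1 `` {x} \<subseteq> f -` X \<inter> W1" using preimage by (auto simp: nu_of_def)
  moreover obtain R2 where "R2 \<in> S2" "\<forall>u\<in>W2. (f x, u) \<in> R2 \<longrightarrow> (\<exists>y\<in>W1. (x, y) \<in> R1 \<and> f y = u)"
    using backward \<open>R1 \<in> S1\<close> by blast
  ultimately have "R2 `` {f x} \<subseteq> X" using rels by blast
  then show ?thesis using \<open>R2 \<in> S2\<close> \<open>X \<subseteq> W2\<close> by (auto simp: nu_of_def)
qed

lemma back_if_mem_nu_of:
  assumes image: "\<And>X. X \<subseteq> W2 \<Longrightarrow> f -` X \<inter> W1 \<in> nu_of W1 S1 x \<Longrightarrow> X \<in> nu_of W2 S2 (f x)"
    and rels: "\<forall>R\<in>S1. R \<subseteq> W1 \<times> W1"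
    and "f ` W1 \<subseteq> W2" "R1 \<in> S1"
  shows "\<exists>R2\<in>S2. \<forall>u\<in>W2. (f x, u) \<in> R2 \<longrightarrow> (\<exists>y\<in>W1. (x, y) \<in> R1 \<and> f y = u)"
proof -
  have succ: "R1 `` {x} \<subseteq> W1" using rels \<open>R1 \<in> S1\<close> by blast
  then have "f -` (f ` (R1 `` {x})) \<inter> W1 \<in> nu_of W1 S1 x"
    using \<open>R1 \<in> S1\<close> unfolding nu_of_def by blast
  then have "f ` (R1 `` {x}) \<in> nu_of W2 S2 (f x)"
    by (rule image[rotated]) (use succ \<open>f ` W1 \<subseteq> W2\<close> in blast)
  then obtain R2 where "R2 \<in> S2" "R2 `` {f x} \<subseteq> f ` (R1 `` {x})"
    by (auto simp: nu_of_def)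
  then show ?thesis using succ by blast
qed

lemma mkf_hom_iff_nfr_hom:
  assumes "mkf W1 S1" "mkf W2 S2" "f ` W1 \<subseteq> W2"
  shows "mkf_hom W1 S1 W2 S2 f \<longleftrightarrow> nfr_hom W1 (nu_of W1 S1) W2 (nu_of W2 S2) f"
proof -
  have rels1: "\<forall>R\<in>S1. R \<subseteq> W1 \<times> W1" and rels2: "\<forall>R\<in>S2. R \<subseteq> W2 \<times> W2"
    using assms(1,2) by (auto simp: mkf_def)
  show ?thesis
  proof
    assume hom: "mkf_hom W1 S1 W2 S2 f"
    have "f -` X \<inter> W1 \<in> nu_of W1 S1 c \<longleftrightarrow> X \<in> nu_of W2 S2 (f c)"
      if "c \<in> W1" "X \<subseteq> W2" for c X
    proof
      show "X \<in> nu_of W2 S2 (f c)" if "f -` X \<inter> W1 \<in> nu_of W1 S1 c"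
        by (rule mem_nu_of_if_back[where f = f and x = c, OF _ rels2 \<open>X \<subseteq> W2\<close> that])
          (use hom \<open>c \<in> W1\<close> in \<open>unfold mkf_hom_def, blast\<close>)
      show "f -` X \<inter> W1 \<in> nu_of W1 S1 c" if "X \<in> nu_of W2 S2 (f c)"
        by (rule preimage_mem_nu_of_if_forth[where f = f and x = c, OF _ rels1 that])
          (use hom \<open>c \<in> W1\<close> in \<open>unfold mkf_hom_def, blast\<close>)
    qed
    then show "nfr_hom W1 (nu_of W1 S1) W2 (nu_of W2 S2) f"
      using assms(3) unfolding nfr_hom_def by blast
  next
    assume "nfr_hom W1 (nu_of W1 S1) W2 (nu_of W2 S2) f"
    then have nbhds: "f -` X \<inter> W1 \<in> nu_of W1 S1 c \<longleftrightarrow> X \<in> nu_of W2 S2 (f c)"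
      if "c \<in> W1" "X \<subseteq> W2" for c X
      using that unfolding nfr_hom_def by blast
    have "\<exists>R1\<in>S1. \<forall>y\<in>W1. (x, y) \<in> R1 \<longrightarrow> (f x, f y) \<in> R2"
      if "x \<in> W1" "R2 \<in> S2" for x R2
      by (rule forth_if_preimage_mem_nu_of[where f = f and x = x, OF _ rels2 that(2)])
        (use nbhds that(1) in blast)
    moreover have "\<exists>R2\<in>S2. \<forall>u\<in>W2. (f x, u) \<in> R2 \<longrightarrow> (\<exists>y\<in>W1. (x, y) \<in> R1 \<and> f y = u)"
      if "x \<in> W1" "R1 \<in> S1" for x R1
      by (rule back_if_mem_nu_of[where f = f and x = x, OF _ rels1 assms(3) that(2)])
        (use nbhds that(1) in blast)
    ultimately show "mkf_hom W1 S1 W2 S2 f"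
      using assms(3) unfolding mkf_hom_def by blast
  qed
qed

theorem lemma6p2:
  fixes \<kappa> :: "'k rel"
    and W :: "'a set" and S :: "'a rel set"
    and W1 :: "'a set" and S1 :: "'a rel set"
    and W2 :: "'b set" and S2 :: "'b rel set"
  assumes "Card_order \<kappa>"
  shows "(mkf_kappa \<kappa> W S \<longrightarrow> nfr_complete \<kappa> W (nu_of W S))
    \<and> (mkf_kappa \<kappa> W1 S1 \<longrightarrow> mkf_kappa \<kappa> W2 S2 \<longrightarrow>
        (\<forall>f. f ` W1 \<subseteq> W2 \<longrightarrow>
          (mkf_hom W1 S1 W2 S2 f \<longleftrightarrow> nfr_hom W1 (nu_of W1 S1) W2 (nu_of W2 S2) f)))"
proof (intro conjI impI allI)
  show "nfr_complete \<kappa> W (nu_of W S)" if "mkf_kappa \<kappa> W S"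
    using that by (rule nfr_complete_nu_of)
  show "mkf_hom W1 S1 W2 S2 f \<longleftrightarrow> nfr_hom W1 (nu_of W1 S1) W2 (nu_of W2 S2) f"
    if "mkf_kappa \<kappa> W1 S1" "mkf_kappa \<kappa> W2 S2" "f ` W1 \<subseteq> W2" for f :: "'a \<Rightarrow> 'b"
    using that by (intro mkf_hom_iff_nfr_hom) (simp_all add: mkf_kappa_def)
qed

end
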